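(* Let $\mathcal{D}$ be a DAG on vertex set $[p]$, let $\mathcal{V} \subseteq [p]$, and let $k \in \mathcal{V}$. Then the fill edge set of $k$ over $\mathcal{V}$ consists exactly of the pairs of neighbors of $k$ in $\mathcal{M}_{\mathcal{V}}(\mathcal{D})$ that are not adjacent to each other in $\mathcal{M}_{\mathcal{V}}(\mathcal{D})$: \[ \mathcal{F}_{\mathcal{D}}(\mathcal{V}, k) = \{\, i - j \;:\; i \neq j,\ i, j \in \mathrm{nbr}_{\mathcal{M}_{\mathcal{V}}(\mathcal{D})}(k),\ i \not\sim_{\mathcal{M}_{\mathcal{V}}(\mathcal{D})} j \,\}. \]
   Context: For a DAG $\mathcal{D}$ on $[p]$ and $i, j \in [p]$, $S \subseteq [p]\setminus\{i,j\}$, write $i \perp\!\!\!\perp_{\mathcal{D}} j \mid S$ if $i$ and $j$ are d-separated given $S$ in $\mathcal{D}$, and $i \not\perp\!\!\!\perp_{\mathcal{D}} j \mid S$ if they are d-connected. For $\mathcal{V} \subseteq [p]$, the moral subgraph $\mathcal{M}_{\mathcal{V}}(\mathcal{D})$ is the undirected graph with vertex set $\mathcal{V}$ and edge set $\{ i - j : i \neq j \in \mathcal{V},\ i \not\perp\!\!\!\perp_{\mathcal{D}} j \mid \mathcal{V}\setminus\{i,j\}\}$. For an undirected graph $\mathcal{G}$ and vertex set $W$, $\mathcal{G}[W]$ is the induced subgraph on $W$; $\mathrm{nbr}_{\mathcal{G}}(k)$ is the set of neighbors of $k$ in $\mathcal{G}$, and $i \sim_{\mathcal{G}} j$ means $i,j$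 are adjacent in $\mathcal{G}$. Write $\mathcal{V}\setminus k := \mathcal{V}\setminus\{k\}$. The fill edge set of $k$ over $\mathcal{V}$ is the set of edges $\mathcal{F}_{\mathcal{D}}(\mathcal{V}, k) = \mathcal{M}_{\mathcal{V}\setminus k}(\mathcal{D}) \setminus \mathcal{M}_{\mathcal{V}}(\mathcal{D})[\mathcal{V}\setminus k]$ (edges present in the moral subgraph on $\mathcal{V}\setminus k$ but absent from the induced subgraph of $\mathcal{M}_{\mathcal{V}}(\mathcal{D})$ on $\mathcal{V}\setminus k$). *)

theory Defs
  imports Main
begin

text \<open>A directed graph on the vertex set [p] = {1..p} is given by its edge relation
  E, where E a b means there is a directed edge a -> b.\<close>

definition dag :: "nat \<Rightarrow> (nat \<Rightarrow> nat \<Rightarrow> bool) \<Rightarrow> bool" where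
  "dag p E \<longleftrightarrow> (\<forall>a b. E a b \<longrightarrow> a \<in> {1..p} \<and> b \<in> {1..p}) \<and> (\<forall>a. \<not> E\<^sup>+\<^sup>+ a a)"

definition adj :: "(nat \<Rightarrow> nat \<Rightarrow> bool) \<Rightarrow> nat \<Rightarrow> nat \<Rightarrow> bool" where
  "adj E a b \<longleftrightarrow> E a b \<or> E b a"

definition is_path :: "(nat \<Rightarrow> nat \<Rightarrow> bool) \<Rightarrow> nat list \<Rightarrow> bool" where
  "is_path E \<pi> \<longleftrightarrow> \<pi> \<noteq> [] \<and> distinct \<pi> \<and> (\<forall>m. Suc m < length \<pi> \<longrightarrow> adj E (\<pi>!m) (\<pi>!Suc m))"

definition collider :: "(nat \<Rightarrow> nat \<Rightarrow> bool) \<Rightarrow> nat list \<Rightarrow> nat \<Rightarrow> bool" where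
  "collider E \<pi> m \<longleftrightarrow> E (\<pi>!(m - 1)) (\<pi>!m) \<and> E (\<pi>!(Suc m)) (\<pi>!m)"

definition d_connecting :: "(nat \<Rightarrow> nat \<Rightarrow> bool) \<Rightarrow> nat set \<Rightarrow> nat list \<Rightarrow> bool" where
  "d_connecting E S \<pi> \<longleftrightarrow>
     (\<forall>m. 0 < m \<and> Suc m < length \<pi> \<longrightarrow>
        (collider E \<pi> m \<longrightarrow> (\<exists>s\<in>S. E\<^sup>*\<^sup>* (\<pi>!m) s)) \<and>
        (\<not> collider E \<pi> m \<longrightarrow> \<pi>!m \<notin> S))"

definition d_connected :: "(nat \<Rightarrow> nat \<Rightarrow> bool) \<Rightarrow> nat \<Rightarrow> nat \<Rightarrow> nat set \<Rightarrow> bool" where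
  "d_connected E i j S \<longleftrightarrow>
     (\<exists>\<pi>. is_path E \<pi> \<and> hd \<pi> = i \<and> last \<pi> = j \<and> d_connecting E S \<pi>)"

definition d_separated :: "(nat \<Rightarrow> nat \<Rightarrow> bool) \<Rightarrow> nat \<Rightarrow> nat \<Rightarrow> nat set \<Rightarrow> bool" where
  "d_separated E i j S \<longleftrightarrow> \<not> d_connected E i j S"

text \<open>Undirected graphs on a vertex set are represented by their edge sets,
  an edge i - j being the two-element set {i,j}.\<close>

definition moral_subgraph :: "(nat \<Rightarrow> nat \<Rightarrow> bool) \<Rightarrow> nat set \<Rightarrow> nat set set" where
  "moral_subgraph E V =
     {{i, j} | i j. i \<noteq> j \<and> i \<in> V \<and> j \<in> V \<and> \<not> d_separated E i j (V - {i, j})}"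

definition induced :: "nat set set \<Rightarrow> nat set \<Rightarrow> nat set set" where
  "induced G W = {e \<in> G. e \<subseteq> W}"

definition nbr :: "nat set set \<Rightarrow> nat \<Rightarrow> nat set" where
  "nbr G k = {i. i \<noteq> k \<and> {i, k} \<in> G}"

definition uadj :: "nat set set \<Rightarrow> nat \<Rightarrow> nat \<Rightarrow> bool" where
  "uadj G i j \<longleftrightarrow> {i, j} \<in> G"

definition fill_edges :: "(nat \<Rightarrow> nat \<Rightarrow> bool) \<Rightarrow> nat set \<Rightarrow> nat \<Rightarrow> nat set set" where
  "fill_edges E V k = moral_subgraph E (V - {k}) - induced (moral_subgraph E V) (V - {k})"

end

theory Submission
  imports Defs
begin

text \<open>Put S = V - {i, j, k}. Then i - j is an edge of the moral subgraph on V iff i and j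
  are d-connected given S \<union> {k}, and an edge of the one on V - {k} iff they are d-connected
  given S. So the theorem reduces to: if i and j are d-separated given S \<union> {k}, they are
  d-connected given S iff i, k are d-connected given S \<union> {j} and j, k given S \<union> {i}.
  A path d-connecting given S but blocked by k runs through k, and its two halves are the
  required paths. Conversely the two paths into k concatenate; at k the concatenation is active
  given S, or else k is a collider without descendant in S and it is active given S \<union> {k}.
  The converse is carried out with walks, which may repeat vertices: in a DAG an active walk
  shortens to an active path, and a collider whose only conditioned descendant is j can be
  replaced by the directed path down to j.\<close>

definition active :: "(nat \<Rightarrow> nat \<Rightarrow> bool) \<Rightarrow> nat set \<Rightarrow> nat \<Rightarrow> nat \<Rightarrow> nat \<Rightarrow> bool" where
  "active E S a b c \<longleftrightarrow>
     (E a b \<and> E c b \<longrightarrow> (\<exists>s\<in>S. E\<^sup>*\<^sup>* b s)) \<and> (\<not> (E a b \<and> E c b) \<longrightarrow> b \<notin> S)"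

fun adj_chain :: "(nat \<Rightarrow> nat \<Rightarrow> bool) \<Rightarrow> nat list \<Rightarrow> bool" where
  "adj_chain E (a # b # w) \<longleftrightarrow> adj E a b \<and> adj_chain E (b # w)"
| "adj_chain E _ \<longleftrightarrow> True"

fun active_chain :: "(nat \<Rightarrow> nat \<Rightarrow> bool) \<Rightarrow> nat set \<Rightarrow> nat list \<Rightarrow> bool" where
  "active_chain E S (a # b # c # w) \<longleftrightarrow> active E S a b c \<and> active_chain E S (b # c # w)"
| "active_chain E S _ \<longleftrightarrow> True"

definition active_walk :: "(nat \<Rightarrow> nat \<Rightarrow> bool) \<Rightarrow> nat set \<Rightarrow> nat \<Rightarrow> nat \<Rightarrow> nat list \<Rightarrow> bool" where
  "active_walk E S i j w \<longleftrightarrow>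
     w \<noteq> [] \<and> hd w = i \<and> last w = j \<and> adj_chain E w \<and> active_chain E S w"

lemma active_commute: "active E S a b c \<longleftrightarrow> active E S c b a"
  unfolding active_def by blast

lemma active_insert: "b \<noteq> x \<Longrightarrow> active E S a b c \<Longrightarrow> active E (insert x S) a b c"
  unfolding active_def by blast

lemma adj_chain_iff_nth:
  "adj_chain E w \<longleftrightarrow> (\<forall>m. Suc m < length w \<longrightarrow> adj E (w ! m) (w ! Suc m))"
proof (induction E w rule: adj_chain.induct)
  case (1 E a b w)
  then show ?case by (auto simp: less_Suc_eq_0_disj)
qed auto

lemma active_chain_iff_nth:
  "active_chain E S w \<longleftrightarrow>
     (\<forall>m. Suc (Suc m) < length w \<longrightarrow> active E S (w ! m) (w ! Suc m) (w ! Suc (Suc m)))"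
proof (induction E S w rule: active_chain.induct)
  case (1 E S a b c w)
  then show ?case by (auto simp: less_Suc_eq_0_disj)
qed auto

lemma d_connecting_iff_active_chain: "d_connecting E S w \<longleftrightarrow> active_chain E S w"
proof -
  have shift: "(\<forall>m. 0 < m \<and> Suc m < length w \<longrightarrow> P m) \<longleftrightarrow>
      (\<forall>m. Suc (Suc m) < length w \<longrightarrow> P (Suc m))" for P
    by (metis Suc_less_eq2 gr0_conv_Suc zero_less_Suc)
  show ?thesis
    unfolding active_chain_iff_nth d_connecting_def collider_def active_def shift by simp
qed

lemma d_connected_iff_path: "d_connected E i j S \<longleftrightarrow> (\<exists>\<pi>. distinct \<pi> \<and> active_walk E S i j \<pi>)"
  unfolding d_connected_def is_path_def active_walk_def d_connecting_iff_active_chain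
    adj_chain_iff_nth by blast

lemma adj_chain_append:
  "adj_chain E (xs @ y # ys) \<longleftrightarrow> adj_chain E (xs @ [y]) \<and> adj_chain E (y # ys)"
  by (induction xs rule: induct_list012) auto

lemma active_chain_append:
  "active_chain E S (xs @ y # ys) \<longleftrightarrow>
     active_chain E S (xs @ [y]) \<and> active_chain E S (y # ys) \<and>
     (xs \<noteq> [] \<longrightarrow> ys \<noteq> [] \<longrightarrow> active E S (last xs) y (hd ys))"
proof (induction xs rule: induct_list012)
  case (2 x)
  then show ?case by (cases ys) auto
next
  case (3 x x' zs)
  then show ?case by (cases zs) auto
qed auto

lemma active_chain_Cons_Cons:
  "active_chain E S (a # b # w) \<longleftrightarrow> (w \<noteq> [] \<longrightarrow> active E S a b (hd w)) \<and> active_chain E S (b # w)"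
  by (cases w) auto

lemma active_chain_snoc_snoc:
  "active_chain E S (w @ [b, c]) \<longleftrightarrow> active_chain E S (w @ [b]) \<and> (w \<noteq> [] \<longrightarrow> active E S (last w) b c)"
  using active_chain_append[of E S w b "[c]"] by simp

lemma adj_chain_rev: "adj_chain E (rev w) \<longleftrightarrow> adj_chain E w"
proof (induction w rule: induct_list012)
  case (3 x y zs)
  have "adj_chain E (rev zs @ [y, x]) \<longleftrightarrow> adj_chain E (rev zs @ [y]) \<and> adj E y x"
    using adj_chain_append[of E "rev zs" y "[x]"] by simp
  then show ?case using 3 by (simp add: adj_def) blast
qed auto

lemma active_chain_rev: "active_chain E S (rev w) \<longleftrightarrow> active_chain E S w"
proof (induction w rule: induct_list012)
  case (3 x y zs)
  have "active_chain E S (rev zs @ [y, x]) \<longleftrightarrow>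
      active_chain E S (rev (y # zs)) \<and> (zs \<noteq> [] \<longrightarrow> active E S (hd zs) y x)"
    by (simp add: active_chain_snoc_snoc last_rev)
  then show ?case using 3 active_commute[of E S x y] by (auto simp: active_chain_Cons_Cons)
qed auto

lemma active_walk_rev: "active_walk E S i j w \<Longrightarrow> active_walk E S j i (rev w)"
  unfolding active_walk_def
  by (metis adj_chain_rev active_chain_rev Nil_is_rev_conv hd_rev last_rev)

lemma d_connected_commute: "d_connected E i j S \<longleftrightarrow> d_connected E j i S"
  unfolding d_connected_iff_path by (metis active_walk_rev distinct_rev)

lemma active_walk_join:
  assumes "active_walk E S i v (xs @ [v])" and "active_walk E S v j (v # ys)"
    and "xs \<noteq> [] \<Longrightarrow> ys \<noteq> [] \<Longrightarrow> active E S (last xs) v (hd ys)"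
  shows "active_walk E S i j (xs @ v # ys)"
  using assms adj_chain_append[of E xs v ys] active_chain_append[of E S xs v ys]
  unfolding active_walk_def by (cases xs) auto

lemma active_chain_insert:
  "x \<notin> set (butlast (tl w)) \<Longrightarrow> active_chain E S w \<Longrightarrow> active_chain E (insert x S) w"
  by (induction E S w rule: active_chain.induct) (auto intro: active_insert)

lemma active_walk_insert:
  "active_walk E S i j w \<Longrightarrow> x \<notin> set (butlast (tl w)) \<Longrightarrow> active_walk E (insert x S) i j w"
  unfolding active_walk_def by (blast intro: active_chain_insert)

lemma acyclic_asym: "\<forall>a. \<not> E\<^sup>+\<^sup>+ a a \<Longrightarrow> E a b \<Longrightarrow> \<not> E b a"
  by (meson tranclp.r_into_trancl tranclp.trancl_into_trancl)

lemma active_chain_descends: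
  "adj_chain E (b # w) \<Longrightarrow> active_chain E S (a # b # w) \<Longrightarrow> E a b \<Longrightarrow>
    \<not> (\<exists>s\<in>S. E\<^sup>*\<^sup>* b s) \<Longrightarrow> E\<^sup>*\<^sup>* b (last (b # w))"
proof (induction w arbitrary: a b)
  case (Cons c w)
  have "\<not> E c b" using Cons.prems(2-4) by (auto simp: active_def)
  then have "E b c" using Cons.prems(1) by (simp add: adj_def)
  then have "\<not> (\<exists>s\<in>S. E\<^sup>*\<^sup>* c s)" using Cons.prems(4) by (meson converse_rtranclp_into_rtranclp)
  then have "E\<^sup>*\<^sup>* c (last (c # w))" using Cons.IH[where a=b and b=c] Cons.prems(1,2) \<open>E b c\<close> by simp
  then show ?case using \<open>E b c\<close> by (simp add: converse_rtranclp_into_rtranclp)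
qed simp

text \<open>If v were a collider without conditioned descendant, the loop v, l, v would be a
  directed cycle.\<close>
lemma active_skip_loop:
  assumes acyclic: "\<forall>a. \<not> E\<^sup>+\<^sup>+ a a"
    and loop: "adj_chain E (v # l @ [v])" "active_chain E S (v # l @ [v])"
    and enter: "active E S a v (hd (l @ [v]))" and leave: "active E S (last (v # l)) v d"
  shows "active E S a v d"
proof (cases "\<exists>s\<in>S. E\<^sup>*\<^sup>* v s")
  case True
  then show ?thesis using enter leave unfolding active_def by blast
next
  case no_descendant: False
  let ?b = "hd (l @ [v])"
  have "\<not> (E a v \<and> E d v)"
  proof
    assume "E a v \<and> E d v"
    then have "\<not> E ?b v" using enter no_descendant unfolding active_def by blast
    have split: "v # l @ [v] = v # ?b # tl (l @ [v])" by (cases l) auto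
    then have "adj E v ?b" using loop(1) by (metis adj_chain.simps(1))
    with \<open>\<not> E ?b v\<close> have "E v ?b" by (simp add: adj_def)
    then have "\<not> (\<exists>s\<in>S. E\<^sup>*\<^sup>* ?b s)"
      using no_descendant by (meson converse_rtranclp_into_rtranclp)
    then have "E\<^sup>*\<^sup>* ?b (last (?b # tl (l @ [v])))"
      using active_chain_descends[of E ?b "tl (l @ [v])" S v] loop split \<open>E v ?b\<close>
      by (metis adj_chain.simps(1))
    then have "E\<^sup>*\<^sup>* ?b v" by (cases l) auto
    with \<open>E v ?b\<close> have "E\<^sup>+\<^sup>+ v v" by (meson rtranclp_into_tranclp2)
    with acyclic show False by blast
  qed
  then show ?thesis using no_descendant unfolding active_def by blast
qed

lemma d_connected_if_active_walk:
  assumes acyclic: "\<forall>a. \<not> E\<^sup>+\<^sup>+ a a"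
  shows "active_walk E S i j w \<Longrightarrow> d_connected E i j S"
proof (induction "length w" arbitrary: w rule: less_induct)
  case less
  show ?case
  proof (cases "distinct w")
    case True
    then show ?thesis using less.prems d_connected_iff_path by blast
  next
    case False
    then obtain xs v mid ys where w: "w = xs @ v # mid @ v # ys"
      using not_distinct_decomp by fastforce
    have walk: "w \<noteq> []" "hd w = i" "last w = j" "adj_chain E w" "active_chain E S w"
      using less.prems unfolding active_walk_def by blast+
    have before: "adj_chain E (xs @ [v])" "active_chain E S (xs @ [v])"
      and enter: "xs \<noteq> [] \<Longrightarrow> active E S (last xs) v (hd (mid @ [v]))"
      using walk(4,5) adj_chain_append[of E xs v "mid @ v # ys"]
        active_chain_append[of E S xs v "mid @ v # ys"]
      unfolding w by (auto simp: hd_append)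
    have after: "adj_chain E (v # ys)" "active_chain E S (v # ys)"
      and leave: "ys \<noteq> [] \<Longrightarrow> active E S (last (v # mid)) v (hd ys)"
      using walk(4,5) adj_chain_append[of E "xs @ v # mid" v ys]
        active_chain_append[of E S "xs @ v # mid" v ys]
      unfolding w by auto
    have loop: "adj_chain E (v # mid @ [v])" "active_chain E S (v # mid @ [v])"
      using walk(4,5) adj_chain_append[of E xs v "mid @ v # ys"]
        active_chain_append[of E S xs v "mid @ v # ys"]
        adj_chain_append[of E "v # mid" v ys] active_chain_append[of E S "v # mid" v ys]
      unfolding w by auto
    have shortcut: "active E S (last xs) v (hd ys)" if "xs \<noteq> []" "ys \<noteq> []"
      using active_skip_loop[OF acyclic loop enter leave] that by blast
    have "hd (xs @ [v]) = i" "last (v # ys) = j"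
      using walk(2,3) unfolding w by (cases xs; simp)+
    then have "active_walk E S i v (xs @ [v])" "active_walk E S v j (v # ys)"
      using before after unfolding active_walk_def by simp_all
    then have "active_walk E S i j (xs @ v # ys)"
      using shortcut by (rule active_walk_join)
    moreover have "length (xs @ v # ys) < length w" unfolding w by simp
    ultimately show ?thesis using less.hyps by blast
  qed
qed

lemma active_walk_extend_to_descendant:
  assumes acyclic: "\<forall>a. \<not> E\<^sup>+\<^sup>+ a a"
  shows "E\<^sup>*\<^sup>* b j \<Longrightarrow> active_walk E S i b w \<Longrightarrow> \<not> (\<exists>s\<in>S. E\<^sup>*\<^sup>* b s) \<Longrightarrow>
    \<exists>w'. active_walk E S i j w'"
proof (induction arbitrary: w rule: converse_rtranclp_induct)
  case base
  then show ?case by blast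
next
  case (step b c)
  have "w \<noteq> []" "last w = b" using step.prems(1) unfolding active_walk_def by simp_all
  then obtain ws where w: "w = ws @ [b]" by (cases w rule: rev_cases) auto
  have "\<not> E c b" using acyclic_asym[OF acyclic step.hyps(1)] .
  moreover have "b \<notin> S" using step.prems(2) by (meson rtranclp.rtrancl_refl)
  ultimately have "active E S (last ws) b c" unfolding active_def by blast
  then have "adj_chain E (ws @ [b, c])" "active_chain E S (ws @ [b, c])"
    using step.prems(1) step.hyps(1) adj_chain_append[of E ws b "[c]"]
      active_chain_snoc_snoc[of E S ws b c]
    unfolding w active_walk_def by (simp_all add: adj_def)
  moreover have "hd (ws @ [b, c]) = i"
    using step.prems(1) unfolding w active_walk_def by (cases ws) simp_all
  ultimately have "active_walk E S i c (ws @ [b, c])" unfolding active_walk_def by simp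
  moreover have "\<not> (\<exists>s\<in>S. E\<^sup>*\<^sup>* c s)"
    using step.prems(2) step.hyps(1) by (meson converse_rtranclp_into_rtranclp)
  ultimately show ?case using step.IH by blast
qed

lemma active_chain_remove_or_reach:
  assumes acyclic: "\<forall>a. \<not> E\<^sup>+\<^sup>+ a a"
  shows "adj_chain E w \<Longrightarrow> active_chain E (insert j S) w \<Longrightarrow>
    active_chain E S w \<or> (\<exists>w'. active_walk E S (hd w) j w')"
proof (induction w rule: rev_induct)
  case (snoc x u)
  show ?case
  proof (cases "u = []")
    case False
    then obtain ws b where u: "u = ws @ [b]" by (cases u rule: rev_cases) auto
    have chains: "adj_chain E u" "active_chain E (insert j S) u"
      and junction: "ws \<noteq> [] \<Longrightarrow> active E (insert j S) (last ws) b x"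
      using snoc.prems adj_chain_append[of E ws b "[x]"] active_chain_snoc_snoc[of E _ ws b x]
      unfolding u by auto
    have hd_eq: "hd (u @ [x]) = hd u" using False by simp
    from snoc.IH[OF chains] show ?thesis
    proof
      assume active: "active_chain E S u"
      show ?thesis
      proof (cases "ws \<noteq> [] \<longrightarrow> active E S (last ws) b x")
        case True
        then show ?thesis using active active_chain_snoc_snoc[of E S ws b x] unfolding u by simp
      next
        case False
        then have "E\<^sup>*\<^sup>* b j" and no_descendant: "\<not> (\<exists>s\<in>S. E\<^sup>*\<^sup>* b s)"
          using junction unfolding active_def by blast+
        moreover have "active_walk E S (hd u) b u"
          using active chains unfolding u active_walk_def by simp
        ultimately show ?thesis
          using active_walk_extend_to_descendant[OF acyclic _ _ no_descendant] hd_eq by simp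
      qed
    qed (simp add: hd_eq)
  qed simp
qed simp

lemma d_connected_split_at:
  assumes "d_connected E i j S" and "\<not> d_connected E i j (insert k S)"
    and "i \<noteq> k" and "j \<noteq> k"
  shows "d_connected E i k (insert j S) \<and> d_connected E k j (insert i S)"
proof -
  obtain \<pi> where \<pi>: "distinct \<pi>" "active_walk E S i j \<pi>"
    using assms(1) d_connected_iff_path by blast
  have "k \<in> set \<pi>"
  proof (rule ccontr)
    assume "k \<notin> set \<pi>"
    then have "k \<notin> set (butlast (tl \<pi>))" by (metis in_set_butlastD list.sel(2) list.set_sel(2))
    then have "active_walk E (insert k S) i j \<pi>" using \<pi>(2) by (rule active_walk_insert[rotated])
    then show False using assms(2) \<pi>(1) d_connected_iff_path by blast
  qed
  then obtain xs ys where \<pi>_split: "\<pi> = xs @ k # ys" by (meson split_list)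
  have "xs \<noteq> []" "ys \<noteq> []" using \<pi>(2) assms(3,4) unfolding \<pi>_split active_walk_def by auto
  then have "i \<in> set xs" "j \<in> set ys" using \<pi>(2) unfolding \<pi>_split active_walk_def by auto
  have "active_walk E S i k (xs @ [k])" "active_walk E S k j (k # ys)"
    using \<pi>(2) \<open>xs \<noteq> []\<close> adj_chain_append[of E xs k ys] active_chain_append[of E S xs k ys]
    unfolding \<pi>_split active_walk_def by auto
  moreover have "j \<notin> set (butlast (tl (xs @ [k])))" "i \<notin> set (butlast (tl (k # ys)))"
    using \<pi>(1) \<open>i \<in> set xs\<close> \<open>j \<in> set ys\<close> \<open>xs \<noteq> []\<close> unfolding \<pi>_split
    by (auto simp: butlast_append dest: in_set_butlastD list.set_sel(2))
  ultimately have "active_walk E (insert j S) i k (xs @ [k])" "active_walk E (insert i S) k j (k # ys)"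
    by (simp_all add: active_walk_insert)
  moreover have "distinct (xs @ [k])" "distinct (k # ys)" using \<pi>(1) unfolding \<pi>_split by auto
  ultimately show ?thesis using d_connected_iff_path by blast
qed

lemma d_connected_join_at:
  assumes acyclic: "\<forall>a. \<not> E\<^sup>+\<^sup>+ a a"
    and "d_connected E i k (insert j S)" and "d_connected E j k (insert i S)"
    and "\<not> d_connected E i j (insert k S)"
    and "i \<noteq> k" and "j \<noteq> k" and "k \<notin> S"
  shows "d_connected E i j S"
proof (rule ccontr)
  assume "\<not> d_connected E i j S"
  then have no_walk: "\<not> active_walk E S i j w" "\<not> active_walk E S j i w" for w
    using d_connected_if_active_walk[OF acyclic] d_connected_commute by blast+
  obtain \<pi>\<^sub>1 where \<pi>\<^sub>1: "distinct \<pi>\<^sub>1" "active_walk E (insert j S) i k \<pi>\<^sub>1"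
    using assms(2) d_connected_iff_path by blast
  obtain \<pi>\<^sub>2 where \<pi>\<^sub>2: "distinct \<pi>\<^sub>2" "active_walk E (insert i S) j k \<pi>\<^sub>2"
    using assms(3) d_connected_iff_path by blast
  have "active_walk E S i k \<pi>\<^sub>1"
    using active_chain_remove_or_reach[OF acyclic, of \<pi>\<^sub>1 j S] \<pi>\<^sub>1(2) no_walk(1)
    unfolding active_walk_def by auto
  moreover have "active_walk E S j k \<pi>\<^sub>2"
    using active_chain_remove_or_reach[OF acyclic, of \<pi>\<^sub>2 i S] \<pi>\<^sub>2(2) no_walk(2)
    unfolding active_walk_def by auto
  moreover obtain xs where xs: "\<pi>\<^sub>1 = xs @ [k]"
    using \<pi>\<^sub>1(2) unfolding active_walk_def by (cases \<pi>\<^sub>1 rule: rev_cases) auto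
  moreover obtain ys where ys: "rev \<pi>\<^sub>2 = k # ys"
    using \<pi>\<^sub>2(2) unfolding active_walk_def by (cases \<pi>\<^sub>2 rule: rev_cases) auto
  ultimately have walks: "active_walk E S i k (xs @ [k])" "active_walk E S k j (k # ys)"
    using active_walk_rev by fastforce+
  have "xs \<noteq> []" "ys \<noteq> []" using walks assms(5,6) unfolding active_walk_def by auto
  have "k \<notin> set xs" "k \<notin> set ys"
    using \<pi>\<^sub>1(1) \<pi>\<^sub>2(1) xs distinct_rev[of \<pi>\<^sub>2] unfolding ys by auto
  show False
  proof (cases "active E S (last xs) k (hd ys)")
    case True
    then have "active_walk E S i j (xs @ k # ys)" using active_walk_join[OF walks] by blast
    with no_walk(1) show False by blast
  next
    case False
    then have "active E (insert k S) (last xs) k (hd ys)"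
      using assms(7) unfolding active_def by blast
    moreover have "k \<notin> set (butlast (tl (xs @ [k])))" "k \<notin> set (butlast (tl (k # ys)))"
      using \<open>k \<notin> set xs\<close> \<open>k \<notin> set ys\<close> \<open>xs \<noteq> []\<close>
      by (auto simp: butlast_append dest: in_set_butlastD list.set_sel(2))
    ultimately have "active_walk E (insert k S) i j (xs @ k # ys)"
      using walks by (blast intro: active_walk_join active_walk_insert)
    with assms(4) show False using d_connected_if_active_walk[OF acyclic] by blast
  qed
qed

lemma fill_edge_criterion:
  assumes "\<forall>a. \<not> E\<^sup>+\<^sup>+ a a"
    and "\<not> d_connected E i j (insert k S)" and "i \<noteq> k" and "j \<noteq> k" and "k \<notin> S"
  shows "d_connected E i j S \<longleftrightarrow> d_connected E i k (insert j S) \<and> d_connected E j k (insert i S)"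
  using assms d_connected_split_at d_connected_join_at d_connected_commute by metis

lemma moral_subgraph_memE:
  assumes "e \<in> moral_subgraph E W"
  obtains a b where "e = {a, b}" and "a \<noteq> b"
  using assms unfolding moral_subgraph_def by blast

lemma doubleton_mem_moral_subgraph_iff:
  "{a, b} \<in> moral_subgraph E W \<longleftrightarrow> a \<noteq> b \<and> a \<in> W \<and> b \<in> W \<and> d_connected E a b (W - {a, b})"
proof
  assume "{a, b} \<in> moral_subgraph E W"
  then obtain i j where "{a, b} = {i, j}" "i \<noteq> j" "i \<in> W" "j \<in> W" "d_connected E i j (W - {i, j})"
    unfolding moral_subgraph_def d_separated_def by blast
  then show "a \<noteq> b \<and> a \<in> W \<and> b \<in> W \<and> d_connected E a b (W - {a, b})"
    using d_connected_commute by (auto simp: doubleton_eq_iff insert_commute)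
qed (auto simp: moral_subgraph_def d_separated_def)

lemma nbr_moral_subgraph_iff:
  "i \<in> nbr (moral_subgraph E W) k \<longleftrightarrow> i \<noteq> k \<and> i \<in> W \<and> k \<in> W \<and> d_connected E i k (W - {i, k})"
  unfolding nbr_def doubleton_mem_moral_subgraph_iff by blast

lemma doubleton_mem_fill_edges_iff:
  "{i, j} \<in> fill_edges E V k \<longleftrightarrow> {i, j} \<in> moral_subgraph E (V - {k}) \<and> {i, j} \<notin> moral_subgraph E V"
  using doubleton_mem_moral_subgraph_iff[of i j E "V - {k}"]
  unfolding fill_edges_def induced_def by blast

lemma doubleton_mem_fill_edges_iff_nbr:
  assumes acyclic: "\<forall>a. \<not> E\<^sup>+\<^sup>+ a a" and "k \<in> V" and "i \<noteq> j"
  defines "M \<equiv> moral_subgraph E V"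
  shows "{i, j} \<in> fill_edges E V k \<longleftrightarrow> i \<in> nbr M k \<and> j \<in> nbr M k \<and> \<not> uadj M i j"
proof (cases "i \<in> V - {k} \<and> j \<in> V - {k}")
  case True
  let ?S = "V - {i, j, k}"
  have "V - {k} - {i, j} = ?S" "V - {i, j} = insert k ?S"
    "V - {i, k} = insert j ?S" "V - {j, k} = insert i ?S"
    using True assms(2,3) by auto
  then show ?thesis
    using fill_edge_criterion[OF acyclic, of i j k ?S] True assms(2,3)
    by (auto simp: M_def doubleton_mem_fill_edges_iff doubleton_mem_moral_subgraph_iff
        nbr_moral_subgraph_iff uadj_def)
qed (use assms(3) in \<open>auto simp: M_def doubleton_mem_fill_edges_iff
      doubleton_mem_moral_subgraph_iff nbr_moral_subgraph_iff\<close>)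

theorem proposition1:
  fixes p :: nat and E :: "nat \<Rightarrow> nat \<Rightarrow> bool" and V :: "nat set" and k :: nat
  assumes "dag p E" and "V \<subseteq> {1..p}" and "k \<in> V"
  shows "fill_edges E V k =
    {{i, j} | i j. i \<noteq> j \<and> i \<in> nbr (moral_subgraph E V) k \<and> j \<in> nbr (moral_subgraph E V) k
                 \<and> \<not> uadj (moral_subgraph E V) i j}"
proof -
  have acyclic: "\<forall>a. \<not> E\<^sup>+\<^sup>+ a a" using assms(1) unfolding dag_def by blast
  let ?M = "moral_subgraph E V"
  note edge = doubleton_mem_fill_edges_iff_nbr[OF acyclic \<open>k \<in> V\<close>]
  show ?thesis
  proof (intro set_eqI iffI)
    fix e assume e: "e \<in> fill_edges E V k"
    then obtain i j where "e = {i, j}" "i \<noteq> j"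
      unfolding fill_edges_def by (blast elim: moral_subgraph_memE)
    with e edge show "e \<in> {{i, j} | i j. i \<noteq> j \<and> i \<in> nbr ?M k \<and> j \<in> nbr ?M k \<and> \<not> uadj ?M i j}"
      by blast
  qed (use edge in blast)
qed

end
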